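(* Let $\mathcal{T}\subset\mathbb{R}^3$ be a conforming tetrahedral mesh that is 4-colorable, fix a 4-coloring of its vertices with colors $A,B,C,D$, fix time-slices $s_0<s_1<\dots<s_M$, and let $\mathcal{T}'\subset\mathbb{R}^4$ be the pentatope mesh produced from $\mathcal{T}$ by extrusion-subdivision according to the subdivision rule described in the context. Then $\mathcal{T}'$ admits a consistent tagging.
   Context: A 4-coloring of a tetrahedral mesh assigns to each vertex one of four labels $A,B,C,D$ so that no two vertices joined by an edge of the mesh share a label; in particular every tetrahedron has exactly one vertex of each color. For $r\in\mathbb{R}$ and $v=(a_0,a_1,a_2)\in\mathbb{R}^3$ let $\psi_r(v)=(a_0,a_1,a_2,r)\in\mathbb{R}^4$. Extrusion-subdivision (subdivision rule): for each tetrahedron $T\in\mathcal{T}$ with vertices $v_A,v_B,v_C,v_D$ (subscript = color) and each $i\in\{0,\dots,M-1\}$, put $x_X=\psi_{s_i}(v_X)$ and $x_X'=\psi_{s_{i+1}}(v_X)$ for $X\in\{A,B,C,D\}$. The prism $\operatorname{conv}(\psi_{s_i}(T),\psi_{s_{i+1}}(T))$ is subdivided into the four pentatopes $\tau_1=\operatorname{conv}(x_A,x_B,x_C,x_D,x_D')$, $\tau_2=\operatorname{conv}(x_A,x_B,x_C,x_C',x_D')$, $\tau_3=\operatorname{conv}(x_A,x_B,x_B',x_C',x_D')$, $\tau_4=\operatorname{conv}(x_A,x_A',x_B',x_C',x_D')$. The mesh $\mathcal{T}'$ consists of all these pentatopes over all $T\in\mathcal{T}$ and all $i$. A tagged pentatope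 is an ordering $(x_0,x_1,x_2,x_3,x_4)$ of the vertices of a pentatope together with an integer type $\gamma\in\{0,1,2,3\}$, written $t=(x_0,x_1,x_2,x_3,x_4)_\gamma$. Bisection rule: bisecting $t=(x_0,\dots,x_4)_\gamma$ along its refinement edge $\overline{x_0x_4}$ gives the children $t_1=(x_0,x',x_1,x_2,x_3)_{\gamma'}$ and $t_2=(x_4,x',x_3,x_2,x_1)_{\gamma'}$ if $\gamma=0$, $t_2=(x_4,x',x_1,x_3,x_2)_{\gamma'}$ if $\gamma=1$, $t_2=(x_4,x',x_1,x_2,x_3)_{\gamma'}$ if $\gamma\in\{2,3\}$, where $x'=(x_0+x_4)/2$ and $\gamma'=(\gamma+1)\bmod 4$. Reflection: $t_R=(x_4,x_3,x_2,x_1,x_0)_\gamma$ if $\gamma=0$, $t_R=(x_4,x_1,x_3,x_2,x_0)_\gamma$ if $\gamma=1$, $t_R=(x_4,x_1,x_2,x_3,x_0)_\gamma$ if $\gamma\in\{2,3\}$. Two tagged pentatopes $t,t'$ are reflected neighbors if they share a common hyperface (3-dimensional face), have the same type, and the vertex order of $t'$ agrees with the vertex order of $t$ or of $t_R$ in all but one position. Two tagged pentatopes $t=(x_0,\dots,x_4)_\gamma$, $t'=(x_0',\dots,x_4')_\gamma$ of the same type sharing a hyperface are consistently tagged if: (1) when $\overline{x_0x_4}$ or $\overline{x_0'x_4'}$ is contained in the shared hyperface, $t$ and $t'$ are reflected neighbors; (2) otherwise, the child of $t$ and the child of $t'$ (under the bisection rule) that share the common hyperface are reflected neighbors. A consistent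 tagging of a mesh is a choice of tag for every pentatope of the mesh such that any two neighboring (hyperface-sharing) pentatopes are consistently tagged. *)

theory Defs
  imports "HOL-Analysis.Analysis"
begin

text \<open>Points of R^3 are of type real^3; points of R^4 are represented as real^3 \<times> real,
  the last coordinate being the time coordinate.\<close>

type_synonym pt3 = "real^3"
type_synonym pt4 = "(real^3) \<times> real"

datatype colour = cA | cB | cC | cD

definition psi :: "real \<Rightarrow> pt3 \<Rightarrow> pt4" where
  "psi r v = (v, r)"

definition conforming_tet_mesh :: "pt3 set set \<Rightarrow> bool" where
  "conforming_tet_mesh Tm \<longleftrightarrow> finite Tm \<and>
     (\<forall>T\<in>Tm. card T = 4 \<and> \<not> affine_dependent T) \<and>
     (\<forall>T1\<in>Tm. \<forall>T2\<in>Tm. convex hull T1 \<inter> convex hull T2 = convex hull (T1 \<inter> T2))"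

definition four_colouring :: "pt3 set set \<Rightarrow> (pt3 \<Rightarrow> colour) \<Rightarrow> bool" where
  "four_colouring Tm col \<longleftrightarrow>
     (\<forall>T\<in>Tm. \<forall>u\<in>T. \<forall>v\<in>T. u \<noteq> v \<longrightarrow> col u \<noteq> col v)"

definition vtx :: "(pt3 \<Rightarrow> colour) \<Rightarrow> pt3 set \<Rightarrow> colour \<Rightarrow> pt3" where
  "vtx col T X = (THE v. v \<in> T \<and> col v = X)"

definition extrusion_subdivision ::
  "pt3 set set \<Rightarrow> (pt3 \<Rightarrow> colour) \<Rightarrow> (nat \<Rightarrow> real) \<Rightarrow> nat \<Rightarrow> pt4 set set" where
  "extrusion_subdivision Tm col s M =
     (\<Union>T\<in>Tm. \<Union>i\<in>{..<M}.
        (let x = (\<lambda>X. psi (s i) (vtx col T X));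
             x' = (\<lambda>X. psi (s (Suc i)) (vtx col T X))
         in { {x cA, x cB, x cC, x cD, x' cD},
              {x cA, x cB, x cC, x' cC, x' cD},
              {x cA, x cB, x' cB, x' cC, x' cD},
              {x cA, x' cA, x' cB, x' cC, x' cD} }))"

text \<open>Tagged pentatopes: a vertex ordering (list of length 5) together with a type.\<close>

type_synonym tagged = "pt4 list \<times> nat"

definition bisect_children :: "tagged \<Rightarrow> tagged set" where
  "bisect_children t = (let xs = fst t; g = snd t;
       x0 = xs!0; x1 = xs!1; x2 = xs!2; x3 = xs!3; x4 = xs!4;
       xm = (1/2) *\<^sub>R (x0 + x4); g' = (g + 1) mod 4;
       t1 = ([x0, xm, x1, x2, x3], g');
       t2 = (if g = 0 then ([x4, xm, x3, x2, x1], g')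
             else if g = 1 then ([x4, xm, x1, x3, x2], g')
             else ([x4, xm, x1, x2, x3], g'))
     in {t1, t2})"

definition reflect :: "tagged \<Rightarrow> tagged" where
  "reflect t = (let xs = fst t; g = snd t in
     if g = 0 then ([xs!4, xs!3, xs!2, xs!1, xs!0], g)
     else if g = 1 then ([xs!4, xs!1, xs!3, xs!2, xs!0], g)
     else ([xs!4, xs!1, xs!2, xs!3, xs!0], g))"

definition agree_but_one :: "'a list \<Rightarrow> 'a list \<Rightarrow> bool" where
  "agree_but_one xs ys \<longleftrightarrow> length xs = length ys \<and>
     (\<exists>i<length xs. \<forall>j<length xs. j \<noteq> i \<longrightarrow> xs!j = ys!j)"

definition share_hyperface :: "tagged \<Rightarrow> tagged \<Rightarrow> bool" where
  "share_hyperface t t' \<longleftrightarrow> card (set (fst t) \<inter> set (fst t')) = 4"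

definition reflected_neighbors :: "tagged \<Rightarrow> tagged \<Rightarrow> bool" where
  "reflected_neighbors t t' \<longleftrightarrow> share_hyperface t t' \<and> snd t = snd t' \<and>
     (agree_but_one (fst t) (fst t') \<or> agree_but_one (fst (reflect t)) (fst t'))"

definition consistently_tagged :: "tagged \<Rightarrow> tagged \<Rightarrow> bool" where
  "consistently_tagged t t' \<longleftrightarrow> snd t = snd t' \<and> share_hyperface t t' \<and>
     (let F = set (fst t) \<inter> set (fst t') in
      if {fst t ! 0, fst t ! 4} \<subseteq> F \<or> {fst t' ! 0, fst t' ! 4} \<subseteq> F
      then reflected_neighbors t t'
      else (\<exists>c\<in>bisect_children t. \<exists>c'\<in>bisect_children t'.
              F \<subseteq> set (fst c) \<and> F \<subseteq> set (fst c') \<and> reflected_neighbors c c'))"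

definition is_tag :: "pt4 set \<Rightarrow> tagged \<Rightarrow> bool" where
  "is_tag P t \<longleftrightarrow> length (fst t) = 5 \<and> distinct (fst t) \<and> set (fst t) = P \<and> snd t < 4"

definition consistent_tagging :: "pt4 set set \<Rightarrow> (pt4 set \<Rightarrow> tagged) \<Rightarrow> bool" where
  "consistent_tagging Pm tg \<longleftrightarrow>
     (\<forall>P\<in>Pm. is_tag P (tg P)) \<and>
     (\<forall>P\<in>Pm. \<forall>Q\<in>Pm. P \<noteq> Q \<and> card (P \<inter> Q) = 4 \<longrightarrow> consistently_tagged (tg P) (tg Q))"

end

theory Submission
  imports Defs
begin

(*
  Over a tetrahedron T with vertices v_A, v_B, v_C, v_D, list the vertices of its prism column
  as the sequence
    psi s_0 v_D, psi s_0 v_C, psi s_0 v_B, psi s_0 v_A, psi s_1 v_D, psi s_1 v_C, ...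
  The pentatopes tau_1, ..., tau_4 of slab i are exactly the windows of five consecutive points
  starting at positions 4i, ..., 4i+3, so every pentatope is tagged by its window, with type 0.
  The position of a point in the sequence is determined by its time slice and its colour, hence
  a vertex shared by two pentatopes has the same position in both sequences. Two pentatopes with
  a common hyperface are therefore either consecutive windows of one column, where neither
  refinement edge lies in the common hyperface and the two children containing it are reflected
  neighbours, or windows at the same position in two columns that differ in exactly one interior
  point, where the pentatopes themselves are reflected neighbours.
*)

lemma eq_if_mod_eq_in_interval:
  fixes i j n k :: nat
  assumes "i mod k = j mod k" "i \<in> {n..<n+k}" "j \<in> {n..<n+k}"
  shows "i = j"
proof -
  have no_gap: "\<not> a div k < b div k"
    if "a mod k = b mod k" "a \<in> {n..<n+k}" "b \<in> {n..<n+k}" for a b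
  proof
    assume "a div k < b div k"
    then have "k * (a div k) + k \<le> k * (b div k)"
      by (metis Suc_leI mult_Suc_right mult_le_mono2 add.commute)
    then have "a + k \<le> b"
      using that(1) mult_div_mod_eq[of k a] mult_div_mod_eq[of k b] by linarith
    then show False
      using that(2,3) by simp
  qed
  then have "i div k = j div k"
    using assms by (metis nat_neq_iff)
  then show ?thesis
    using assms(1) by (metis div_mult_mod_eq)
qed

lemma strict_mono_on_atMost_if_Suc:
  fixes s :: "nat \<Rightarrow> 'a :: order"
  assumes "\<forall>i<M. s i < s (Suc i)"
  shows "strict_mono_on {..M} s"
proof (rule strict_mono_onI)
  fix i j assume "i \<in> {..M}" "j \<in> {..M}" "i < j"
  then have "Suc i \<le> j" "j \<le> M" by simp_all
  from \<open>Suc i \<le> j\<close> show "s i < s j"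
  proof (induction rule: dec_induct)
    case base
    then show ?case using assms \<open>Suc i \<le> j\<close> \<open>j \<le> M\<close> by simp
  next
    case (step n)
    then have "s n < s (Suc n)" using assms \<open>j \<le> M\<close> by simp
    with step.IH show ?case by (rule less_trans)
  qed
qed

section \<open>Colours\<close>

lemma UNIV_colour: "(UNIV :: colour set) = {cA, cB, cC, cD}"
  using colour.exhaust by auto

lemma finite_UNIV_colour: "finite (UNIV :: colour set)"
  and card_UNIV_colour: "card (UNIV :: colour set) = 4"
  by (simp_all add: UNIV_colour)

lemma colour_set_eq_UNIV: "card (C :: colour set) = 4 \<Longrightarrow> C = UNIV"
  by (metis card_UNIV_colour card_subset_eq finite_UNIV_colour subset_UNIV)

lemma col_vtx:
  assumes "card T = 4" "inj_on col T"
  shows "col (vtx col T c) = c"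
proof -
  have "col ` T = UNIV"
    using assms by (simp add: colour_set_eq_UNIV card_image)
  then obtain v where "v \<in> T" "col v = c"
    by (metis UNIV_I imageE)
  with assms(2) have "\<exists>!v. v \<in> T \<and> col v = c"
    by (auto dest: inj_onD)
  then show ?thesis
    unfolding vtx_def by (rule theI'[THEN conjunct2])
qed

definition colour_cycle :: "nat \<Rightarrow> colour" where
  "colour_cycle j = [cD, cC, cB, cA] ! (j mod 4)"

lemma mod_4_cases: "(j::nat) mod 4 \<in> {0, 1, 2, 3}"
  by auto

lemma colour_cycle_eq_iff: "colour_cycle i = colour_cycle j \<longleftrightarrow> i mod 4 = j mod 4"
  using mod_4_cases[of i] mod_4_cases[of j] by (auto simp: colour_cycle_def)

lemma colour_cycle_add_4 [simp]: "colour_cycle (j + 4) = colour_cycle j"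
  by (simp add: colour_cycle_eq_iff)

lemma colour_cycle_Suc_neq: "colour_cycle (Suc j) \<noteq> colour_cycle j"
  unfolding colour_cycle_eq_iff by (simp add: mod_Suc)

lemma colour_cycle_image_interval: "colour_cycle ` {n..<n+4} = UNIV"
proof (rule colour_set_eq_UNIV)
  have "inj_on colour_cycle {n..<n+4}"
  proof (rule inj_onI)
    fix i j assume "i \<in> {n..<n+4}" "j \<in> {n..<n+4}" "colour_cycle i = colour_cycle j"
    then show "i = j"
      using eq_if_mod_eq_in_interval[where i = i and j = j and n = n and k = 4]
      by (simp add: colour_cycle_eq_iff)
  qed
  then show "card (colour_cycle ` {n..<n+4}) = 4"
    by (simp add: card_image)
qed

section \<open>Consistent tagging of tagged pentatopes\<close>

lemma length_5_cases:
  assumes "length xs = 5"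
  obtains a0 a1 a2 a3 a4 where "xs = [a0, a1, a2, a3, a4]"
  using assms by (auto simp: numeral_eq_Suc length_Suc_conv)

lemma agree_but_one_5:
  "agree_but_one [a0, a1, a2, a3, a4] [b0, b1, b2, b3, b4] \<longleftrightarrow>
     (a1 = b1 \<and> a2 = b2 \<and> a3 = b3 \<and> a4 = b4) \<or> (a0 = b0 \<and> a2 = b2 \<and> a3 = b3 \<and> a4 = b4) \<or>
     (a0 = b0 \<and> a1 = b1 \<and> a3 = b3 \<and> a4 = b4) \<or> (a0 = b0 \<and> a1 = b1 \<and> a2 = b2 \<and> a4 = b4) \<or>
     (a0 = b0 \<and> a1 = b1 \<and> a2 = b2 \<and> a3 = b3)"
  by (simp add: agree_but_one_def numeral_eq_Suc All_less_Suc Ex_less_Suc) blast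

lemma agree_but_one_commute: "agree_but_one xs ys \<Longrightarrow> agree_but_one ys xs"
  unfolding agree_but_one_def by metis

lemma agree_but_one_reflect_commute:
  assumes "agree_but_one (fst (reflect (xs, g))) ys" "length xs = 5" "length ys = 5"
  shows "agree_but_one (fst (reflect (ys, g))) xs"
proof -
  obtain a0 a1 a2 a3 a4 where xs: "xs = [a0, a1, a2, a3, a4]"
    using assms(2) by (rule length_5_cases)
  obtain b0 b1 b2 b3 b4 where ys: "ys = [b0, b1, b2, b3, b4]"
    using assms(3) by (rule length_5_cases)
  show ?thesis
    using assms(1) unfolding xs ys reflect_def Let_def
    by (simp only: agree_but_one_5 fst_conv nth_Cons_0 nth_Cons_numeral split: if_splits) auto
qed

lemma reflected_neighbors_commute:
  assumes "reflected_neighbors t t'" "length (fst t) = 5" "length (fst t') = 5"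
  shows "reflected_neighbors t' t"
proof -
  obtain xs g ys where t: "t = (xs, g)" and t': "t' = (ys, g)"
    using assms(1) unfolding reflected_neighbors_def by (metis prod.collapse)
  show ?thesis
    using assms agree_but_one_commute agree_but_one_reflect_commute[of xs g ys]
    unfolding t t' reflected_neighbors_def share_hyperface_def by (auto simp: Int_commute)
qed

lemma length_bisect_children: "c \<in> bisect_children t \<Longrightarrow> length (fst c) = 5"
  by (auto simp: bisect_children_def Let_def)

lemma consistently_tagged_commute:
  assumes "consistently_tagged t t'" "length (fst t) = 5" "length (fst t') = 5"
  shows "consistently_tagged t' t"
proof -
  obtain xs g ys where t: "t = (xs, g)" and t': "t' = (ys, g)"
    using assms(1) unfolding consistently_tagged_def by (metis prod.collapse)
  define F where "F = set xs \<inter> set ys"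
  have F_commute: "set ys \<inter> set xs = F"
    unfolding F_def by blast
  have ct: "card F = 4 \<and> (if {xs ! 0, xs ! 4} \<subseteq> F \<or> {ys ! 0, ys ! 4} \<subseteq> F
      then reflected_neighbors t t'
      else (\<exists>c\<in>bisect_children t. \<exists>c'\<in>bisect_children t'.
              F \<subseteq> set (fst c) \<and> F \<subseteq> set (fst c') \<and> reflected_neighbors c c'))"
    using assms(1)
    unfolding consistently_tagged_def share_hyperface_def Let_def t t' fst_conv F_def[symmetric]
    by blast
  show ?thesis
  proof (cases "{xs ! 0, xs ! 4} \<subseteq> F \<or> {ys ! 0, ys ! 4} \<subseteq> F")
    case True
    then have "reflected_neighbors t' t"
      using ct assms(2,3) reflected_neighbors_commute by simp
    then show ?thesis
      using True ct unfolding consistently_tagged_def share_hyperface_def Let_def t t' fst_conv F_commute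
      by auto
  next
    case False
    then obtain c c' where "c \<in> bisect_children t" "c' \<in> bisect_children t'"
      "F \<subseteq> set (fst c)" "F \<subseteq> set (fst c')" "reflected_neighbors c c'"
      using ct by auto
    moreover from this have "reflected_neighbors c' c"
      using reflected_neighbors_commute length_bisect_children by blast
    ultimately show ?thesis
      using False ct unfolding consistently_tagged_def share_hyperface_def Let_def t t' fst_conv F_commute
      by auto
  qed
qed

lemma consistently_tagged_if_agree_but_one:
  assumes "agree_but_one xs ys" "length xs = 5" "xs ! 0 = ys ! 0" "xs ! 4 = ys ! 4"
    and "card (set xs \<inter> set ys) = 4"
  shows "consistently_tagged (xs, g) (ys, g)"
proof -
  have "length ys = 5"
    using assms(1,2) by (simp add: agree_but_one_def)
  then have mem: "xs ! k \<in> set xs" "ys ! k \<in> set ys" if "k < 5" for k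
    using that assms(2) by simp_all
  have "{xs ! 0, xs ! 4} \<subseteq> set xs \<inter> set ys"
    using mem[of 0] mem[of 4] assms(3,4) by simp
  then show ?thesis
    using assms(1,5)
    unfolding consistently_tagged_def reflected_neighbors_def share_hyperface_def Let_def
    by simp
qed

lemma consistently_tagged_shift:
  fixes a0 a1 a2 a3 a4 a5 :: pt4
  assumes "distinct [a0, a1, a2, a3, a4, a5]"
    and "(1/2) *\<^sub>R (a0 + a4) \<noteq> (1/2) *\<^sub>R (a1 + a5)"
  shows "consistently_tagged ([a0, a1, a2, a3, a4], 0) ([a1, a2, a3, a4, a5], 0)"
proof -
  define m where "m = (1/2) *\<^sub>R (a0 + a4)"
  define m' where "m' = (1/2) *\<^sub>R (a1 + a5)"
  define F where "F = {a1, a2, a3, a4}"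
  have F: "set [a0, a1, a2, a3, a4] \<inter> set [a1, a2, a3, a4, a5] = F" "card F = 4"
    using assms(1) unfolding F_def by auto
  have refinement_edges: "\<not> {a0, a4} \<subseteq> F" "\<not> {a1, a5} \<subseteq> F"
    using assms(1) unfolding F_def by auto
  have children: "([a4, m, a3, a2, a1], 1) \<in> bisect_children ([a0, a1, a2, a3, a4], 0)"
    "([a1, m', a2, a3, a4], 1) \<in> bisect_children ([a1, a2, a3, a4, a5], 0)"
    unfolding bisect_children_def m_def m'_def Let_def by simp_all
  have "set [a4, m, a3, a2, a1] \<inter> set [a1, m', a2, a3, a4] = F"
    using assms(2) unfolding F_def m_def m'_def by auto
  moreover have "fst (reflect ([a4, m, a3, a2, a1], 1)) = [a1, m, a2, a3, a4]"
    by (simp add: reflect_def)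
  ultimately have "reflected_neighbors ([a4, m, a3, a2, a1], 1) ([a1, m', a2, a3, a4], 1)"
    unfolding reflected_neighbors_def share_hyperface_def using F(2)
    by (simp add: agree_but_one_5)
  then show ?thesis
    using F refinement_edges children unfolding consistently_tagged_def share_hyperface_def Let_def
    by (auto simp: F_def)
qed

section \<open>The extrusion sequence and its windows\<close>

definition window :: "(nat \<Rightarrow> 'a) \<Rightarrow> nat \<Rightarrow> 'a list" where
  "window f n = map f [n..<n+5]"

lemma window_eq: "window f n = [f n, f (n+1), f (n+2), f (n+3), f (n+4)]"
  by (simp add: window_def upt_rec eval_nat_numeral)

lemma length_window [simp]: "length (window f n) = 5"
  by (simp add: window_def)

lemma set_window: "set (window f n) = f ` {n..<n+5}"
  by (simp add: window_def)

lemma nth_window: "k < 5 \<Longrightarrow> window f n ! k = f (n + k)"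
  by (simp add: window_def)

lemma distinct_window: "inj_on f {n..<n+5} \<Longrightarrow> distinct (window f n)"
  by (simp add: window_def distinct_map)

lemma single_disagreement_in_window:
  fixes f g :: "nat \<Rightarrow> 'a"
  assumes "card {j \<in> {n..<n+5}. f j = g j} = 4"
  obtains i where "i \<in> {n..<n+5}" "f i \<noteq> g i" "\<And>j. j \<in> {n..<n+5} \<Longrightarrow> j \<noteq> i \<Longrightarrow> f j = g j"
proof -
  define K where "K = {j \<in> {n..<n+5}. f j = g j}"
  have "\<not> {n..<n+5} \<subseteq> K"
  proof
    assume "{n..<n+5} \<subseteq> K"
    then have "K = {n..<n+5}"
      unfolding K_def by blast
    then show False
      using assms unfolding K_def by simp
  qed
  then obtain i where i: "i \<in> {n..<n+5}" "i \<notin> K"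
    by blast
  have "K \<subseteq> {n..<n+5} - {i}" "card ({n..<n+5} - {i}) = 4"
    using i unfolding K_def by auto
  then have "K = {n..<n+5} - {i}"
    using assms unfolding K_def[symmetric] by (simp add: card_subset_eq)
  then have "f j = g j" if "j \<in> {n..<n+5}" "j \<noteq> i" for j
    using that unfolding K_def by blast
  moreover have "f i \<noteq> g i"
    using i unfolding K_def by blast
  ultimately show ?thesis
    using i(1) that by blast
qed

lemma agree_but_one_window:
  fixes f g :: "nat \<Rightarrow> 'a"
  assumes "i \<in> {n..<n+5}" "\<And>j. j \<in> {n..<n+5} \<Longrightarrow> j \<noteq> i \<Longrightarrow> f j = g j"
  shows "agree_but_one (window f n) (window g n)"
  unfolding agree_but_one_def
proof (intro conjI exI[of _ "i - n"] allI impI)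
  fix k assume "k < length (window f n)" "k \<noteq> i - n"
  then show "window f n ! k = window g n ! k"
    using assms by (simp add: nth_window)
qed (use assms(1) in auto)

(* The shape 4 * i + (k + m) lets the numeral sums k + m evaluate once k is a numeral. *)
lemma window_slab:
  "window f (4 * i + k) =
     [f (4 * i + k), f (4 * i + (k + 1)), f (4 * i + (k + 2)), f (4 * i + (k + 3)), f (4 * i + (k + 4))]"
  by (simp add: window_eq add.assoc)

definition extrusion_point :: "(pt3 \<Rightarrow> colour) \<Rightarrow> (nat \<Rightarrow> real) \<Rightarrow> pt3 set \<Rightarrow> nat \<Rightarrow> pt4" where
  "extrusion_point col s T j = psi (s (j div 4)) (vtx col T (colour_cycle j))"

lemma extrusion_point_slab:
  "extrusion_point col s T (4 * i + k) = psi (s (i + k div 4)) (vtx col T (colour_cycle k))"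
  by (simp add: extrusion_point_def colour_cycle_def)

lemma extrusion_subdivision_eq_windows:
  "extrusion_subdivision Tm col s M =
     {set (window (extrusion_point col s T) n) | T n. T \<in> Tm \<and> n < 4 * M}"
    (is "_ = {?W T n | T n. _}")
proof -
  have slab: "(let x = (\<lambda>X. psi (s i) (vtx col T X)); x' = (\<lambda>X. psi (s (Suc i)) (vtx col T X))
      in {{x cA, x cB, x cC, x cD, x' cD}, {x cA, x cB, x cC, x' cC, x' cD},
          {x cA, x cB, x' cB, x' cC, x' cD}, {x cA, x' cA, x' cB, x' cC, x' cD}})
    = (\<lambda>k. ?W T (4 * i + k)) ` {0, 1, 2, 3}" for T i
    unfolding image_insert image_empty window_slab extrusion_point_slab
    by (auto simp: colour_cycle_def)
  show ?thesis
    unfolding extrusion_subdivision_def slab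
  proof (intro equalityI subsetI)
    fix P assume "P \<in> (\<Union>T\<in>Tm. \<Union>i\<in>{..<M}. (\<lambda>k. ?W T (4 * i + k)) ` {0, 1, 2, 3})"
    then obtain T i k where "T \<in> Tm" "i < M" "k \<in> {0, 1, 2, 3}" "P = ?W T (4 * i + k)"
      by blast
    moreover from this have "4 * i + k < 4 * M"
      by auto
    ultimately show "P \<in> {?W T n | T n. T \<in> Tm \<and> n < 4 * M}"
      by blast
  next
    fix P assume "P \<in> {?W T n | T n. T \<in> Tm \<and> n < 4 * M}"
    then obtain T n where "T \<in> Tm" "n < 4 * M" "P = ?W T n"
      by blast
    moreover have "n = 4 * (n div 4) + n mod 4" "n mod 4 \<in> {0, 1, 2, 3}" "n div 4 < M"
      using \<open>n < 4 * M\<close> mod_4_cases by auto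
    ultimately show "P \<in> (\<Union>T\<in>Tm. \<Union>i\<in>{..<M}. (\<lambda>k. ?W T (4 * i + k)) ` {0, 1, 2, 3})"
      by (metis (no_types, lifting) UN_iff image_eqI lessThan_iff)
  qed
qed

lemma extrusion_point_eq_imp_eq_index:
  assumes "inj_on s {..M}" "\<And>c. col (vtx col Ta c) = c" "\<And>c. col (vtx col Tb c) = c"
    and "i < 4 * Suc M" "j < 4 * Suc M"
    and "extrusion_point col s Ta i = extrusion_point col s Tb j"
  shows "i = j"
proof -
  have "s (i div 4) = s (j div 4)" and vtx_eq: "vtx col Ta (colour_cycle i) = vtx col Tb (colour_cycle j)"
    using assms(6) by (simp_all add: extrusion_point_def psi_def)
  then have "i div 4 = j div 4"
    using inj_onD[OF assms(1)] assms(4,5) by simp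
  moreover have "colour_cycle i = colour_cycle j"
    using vtx_eq by (metis assms(2,3))
  ultimately show ?thesis
    by (metis colour_cycle_eq_iff div_mult_mod_eq)
qed

lemma inj_on_extrusion_point:
  assumes "inj_on s {..M}" "\<And>c. col (vtx col T c) = c"
  shows "inj_on (extrusion_point col s T) {..<4 * Suc M}"
  using extrusion_point_eq_imp_eq_index[OF assms(1) assms(2) assms(2)] by (auto intro: inj_onI)

lemma extrusion_point_eq_iff_vtx:
  "extrusion_point col s Ta j = extrusion_point col s Tb j \<longleftrightarrow>
     vtx col Ta (colour_cycle j) = vtx col Tb (colour_cycle j)"
  by (simp add: extrusion_point_def psi_def)

lemma extrusion_point_eq_add_4_iff:
  "extrusion_point col s Ta (j + 4) = extrusion_point col s Tb (j + 4) \<longleftrightarrow>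
     extrusion_point col s Ta j = extrusion_point col s Tb j"
  by (simp add: extrusion_point_eq_iff_vtx)

lemma extrusion_point_eqI:
  assumes "\<And>j. j \<in> {n..<n+4} \<Longrightarrow> extrusion_point col s Ta j = extrusion_point col s Tb j"
  shows "extrusion_point col s Ta = extrusion_point col s Tb"
proof -
  have "vtx col Ta c = vtx col Tb c" for c
  proof -
    obtain j where "j \<in> {n..<n+4}" "colour_cycle j = c"
      using colour_cycle_image_interval by (metis UNIV_I imageE)
    then show ?thesis
      using assms extrusion_point_eq_iff_vtx by metis
  qed
  then show ?thesis
    by (simp add: extrusion_point_def fun_eq_iff)
qed

lemma extrusion_point_midpoints_neq:
  assumes "\<And>c. col (vtx col T c) = c"
  shows "(1/2) *\<^sub>R (extrusion_point col s T n + extrusion_point col s T (n + 4)) \<noteq>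
    (1/2) *\<^sub>R (extrusion_point col s T (n + 1) + extrusion_point col s T (n + 5))"
proof -
  have fst_midpoint: "fst ((1/2) *\<^sub>R (extrusion_point col s T j + extrusion_point col s T k)) =
      vtx col T (colour_cycle j)" if "k = j + 4" for j k
    using that by (simp add: extrusion_point_def psi_def scaleR_2 flip: scaleR_add_left)
  have "vtx col T (colour_cycle n) \<noteq> vtx col T (colour_cycle (n + 1))"
    using colour_cycle_Suc_neq[of n] assms by (metis Suc_eq_plus1)
  moreover have
    "fst ((1/2) *\<^sub>R (extrusion_point col s T n + extrusion_point col s T (n + 4))) =
       vtx col T (colour_cycle n)"
    "fst ((1/2) *\<^sub>R (extrusion_point col s T (n + 1) + extrusion_point col s T (n + 5))) =
       vtx col T (colour_cycle (n + 1))"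
    by (rule fst_midpoint; simp)+
  ultimately show ?thesis
    by metis
qed

section \<open>Consistency of neighbouring windows\<close>

lemma consistently_tagged_extrusion_shift:
  assumes "inj_on s {..M}" "\<And>c. col (vtx col T c) = c" "Suc n < 4 * M"
  shows "consistently_tagged (window (extrusion_point col s T) n, 0)
           (window (extrusion_point col s T) (Suc n), 0)"
proof -
  let ?w = "extrusion_point col s T"
  have "inj_on ?w {n..<n+6}"
    using assms(3) by (intro inj_on_subset[OF inj_on_extrusion_point[OF assms(1,2)]]) auto
  then have "distinct (map ?w [n..<n+6])"
    by (simp add: distinct_map)
  then have "distinct [?w n, ?w (n+1), ?w (n+2), ?w (n+3), ?w (n+4), ?w (n+5)]"
    by (simp add: upt_rec eval_nat_numeral)
  then show ?thesis
    using consistently_tagged_shift extrusion_point_midpoints_neq[OF assms(2)]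
    by (simp add: window_eq eval_nat_numeral)
qed

lemma consistently_tagged_extrusion_same_index:
  assumes "card {j \<in> {n..<n+5}. extrusion_point col s Ta j = extrusion_point col s Tb j} = 4"
    and "card (set (window (extrusion_point col s Ta) n) \<inter> set (window (extrusion_point col s Tb) n)) = 4"
  shows "consistently_tagged (window (extrusion_point col s Ta) n, g)
           (window (extrusion_point col s Tb) n, g)"
proof -
  let ?wa = "extrusion_point col s Ta" and ?wb = "extrusion_point col s Tb"
  obtain i where i: "i \<in> {n..<n+5}" "?wa i \<noteq> ?wb i"
    and agree: "\<And>j. j \<in> {n..<n+5} \<Longrightarrow> j \<noteq> i \<Longrightarrow> ?wa j = ?wb j"
    using single_disagreement_in_window[OF assms(1)] by blast
  have "i \<noteq> n"
  proof
    assume "i = n"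
    then have "?wa (n + 4) = ?wb (n + 4)"
      using agree[of "n + 4"] by simp
    with i(2) \<open>i = n\<close> show False
      by (simp only: extrusion_point_eq_add_4_iff)
  qed
  have "i \<noteq> n + 4"
  proof
    assume "i = n + 4"
    then have "?wa n = ?wb n"
      using agree[of n] by simp
    with i(2) \<open>i = n + 4\<close> show False
      by (simp only: extrusion_point_eq_add_4_iff)
  qed
  have "agree_but_one (window ?wa n) (window ?wb n)"
    using i(1) agree by (rule agree_but_one_window)
  moreover have "window ?wa n ! 0 = window ?wb n ! 0" "window ?wa n ! 4 = window ?wb n ! 4"
    using agree[of n] agree[of "n + 4"] \<open>i \<noteq> n\<close> \<open>i \<noteq> n + 4\<close> by (simp_all add: nth_window)
  ultimately show ?thesis
    using assms(2) by (intro consistently_tagged_if_agree_but_one) simp_all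
qed

lemma set_extrusion_windows_Int:
  assumes "inj_on s {..M}" "\<And>c. col (vtx col Ta c) = c" "\<And>c. col (vtx col Tb c) = c"
    and "na < 4 * M" "nb < 4 * M"
  shows "set (window (extrusion_point col s Ta) na) \<inter> set (window (extrusion_point col s Tb) nb) =
    extrusion_point col s Ta `
      {j \<in> {na..<na+5} \<inter> {nb..<nb+5}. extrusion_point col s Ta j = extrusion_point col s Tb j}"
proof (intro equalityI subsetI)
  fix x
  assume "x \<in> set (window (extrusion_point col s Ta) na) \<inter> set (window (extrusion_point col s Tb) nb)"
  then obtain j j' where j: "j \<in> {na..<na+5}" "j' \<in> {nb..<nb+5}"
    and x: "x = extrusion_point col s Ta j" "x = extrusion_point col s Tb j'"
    by (auto simp: set_window)
  moreover have "j = j'"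
    using extrusion_point_eq_imp_eq_index[OF assms(1-3)] j x assms(4,5) by simp
  ultimately have "j \<in> {na..<na+5} \<inter> {nb..<nb+5}" "extrusion_point col s Ta j = extrusion_point col s Tb j"
    by simp_all
  with x(1) show "x \<in> extrusion_point col s Ta `
      {j \<in> {na..<na+5} \<inter> {nb..<nb+5}. extrusion_point col s Ta j = extrusion_point col s Tb j}"
    by blast
next
  fix x
  assume "x \<in> extrusion_point col s Ta `
      {j \<in> {na..<na+5} \<inter> {nb..<nb+5}. extrusion_point col s Ta j = extrusion_point col s Tb j}"
  then obtain j where "j \<in> {na..<na+5}" "j \<in> {nb..<nb+5}"
    and "x = extrusion_point col s Ta j" "x = extrusion_point col s Tb j"
    by auto
  then show "x \<in> set (window (extrusion_point col s Ta) na) \<inter> set (window (extrusion_point col s Tb) nb)"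
    unfolding set_window by blast
qed

lemma consistently_tagged_extrusion_windows_le:
  assumes "inj_on s {..M}" "\<And>c. col (vtx col Ta c) = c" "\<And>c. col (vtx col Tb c) = c"
    and "na < 4 * M" "nb < 4 * M" "na \<le> nb"
    and "set (window (extrusion_point col s Ta) na) \<noteq> set (window (extrusion_point col s Tb) nb)"
    and "card (set (window (extrusion_point col s Ta) na) \<inter> set (window (extrusion_point col s Tb) nb)) = 4"
  shows "consistently_tagged (window (extrusion_point col s Ta) na, 0)
           (window (extrusion_point col s Tb) nb, 0)"
proof -
  let ?wa = "extrusion_point col s Ta" and ?wb = "extrusion_point col s Tb"
  define K where "K = {j \<in> {na..<na+5} \<inter> {nb..<nb+5}. ?wa j = ?wb j}"
  have "inj_on ?wa K"
    using assms(4) unfolding K_def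
    by (intro inj_on_subset[OF inj_on_extrusion_point[OF assms(1,2)]]) auto
  then have "card K = 4"
    using assms(8) set_extrusion_windows_Int[OF assms(1-5)] unfolding K_def[symmetric]
    by (simp add: card_image)
  consider "nb = na" | "nb = Suc na" | "na + 2 \<le> nb"
    using assms(6) by linarith
  then show ?thesis
  proof cases
    case 1
    show ?thesis
      using \<open>card K = 4\<close> assms(8) unfolding K_def 1 Int_absorb
      by (rule consistently_tagged_extrusion_same_index)
  next
    case 2
    have "K \<subseteq> {nb..<nb+4}"
      unfolding K_def using 2 by auto
    then have "K = {nb..<nb+4}"
      using \<open>card K = 4\<close> by (simp add: card_subset_eq)
    then have "?wa = ?wb"
      unfolding K_def by (intro extrusion_point_eqI[of nb]) blast
    then show ?thesis
      using consistently_tagged_extrusion_shift[OF assms(1,2), of na] 2 assms(5) by simp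
  next
    case 3
    have "K \<subseteq> {nb..<na+5}"
      unfolding K_def by auto
    then have "card K \<le> 3"
      using 3 card_mono[of "{nb..<na+5}" K] by simp
    then show ?thesis
      using \<open>card K = 4\<close> by simp
  qed
qed

lemma consistently_tagged_extrusion_windows:
  assumes "inj_on s {..M}" "\<And>c. col (vtx col Ta c) = c" "\<And>c. col (vtx col Tb c) = c"
    and "na < 4 * M" "nb < 4 * M"
    and "set (window (extrusion_point col s Ta) na) \<noteq> set (window (extrusion_point col s Tb) nb)"
    and "card (set (window (extrusion_point col s Ta) na) \<inter> set (window (extrusion_point col s Tb) nb)) = 4"
  shows "consistently_tagged (window (extrusion_point col s Ta) na, 0)
           (window (extrusion_point col s Tb) nb, 0)"
proof (cases "na \<le> nb")
  case True
  then show ?thesis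
    using consistently_tagged_extrusion_windows_le assms by blast
next
  case False
  then have "consistently_tagged (window (extrusion_point col s Tb) nb, 0)
      (window (extrusion_point col s Ta) na, 0)"
    using assms by (intro consistently_tagged_extrusion_windows_le) (auto simp: Int_commute)
  then show ?thesis
    by (rule consistently_tagged_commute) simp_all
qed

theorem proposition1:
  fixes Tm :: "pt3 set set" and col :: "pt3 \<Rightarrow> colour"
    and s :: "nat \<Rightarrow> real" and M :: nat
  assumes "conforming_tet_mesh Tm"
    and "four_colouring Tm col"
    and "\<forall>i<M. s i < s (Suc i)"
  shows "\<exists>tg. consistent_tagging (extrusion_subdivision Tm col s M) tg"
proof -
  let ?Pm = "extrusion_subdivision Tm col s M"
  let ?w = "\<lambda>T. extrusion_point col s T"
  have inj: "inj_on s {..M}"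
    using strict_mono_on_atMost_if_Suc[OF assms(3)] by (rule strict_mono_on_imp_inj_on)
  have col_vtx_mesh: "col (vtx col T c) = c" if "T \<in> Tm" for T c
    using assms(1,2) that unfolding conforming_tet_mesh_def four_colouring_def
    by (intro col_vtx) (auto simp: inj_on_def)
  have "\<forall>P\<in>?Pm. \<exists>T n. T \<in> Tm \<and> n < 4 * M \<and> P = set (window (?w T) n)"
    unfolding extrusion_subdivision_eq_windows by blast
  then obtain tet start where column: "\<And>P. P \<in> ?Pm \<Longrightarrow>
      tet P \<in> Tm \<and> start P < 4 * M \<and> P = set (window (?w (tet P)) (start P))"
    by metis
  define tg where "tg P = (window (?w (tet P)) (start P), 0::nat)" for P
  have "is_tag P (tg P)" if "P \<in> ?Pm" for P
    using column[OF that] unfolding is_tag_def tg_def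
    by (auto intro!: distinct_window inj_on_subset[OF inj_on_extrusion_point[OF inj col_vtx_mesh]])
  moreover have "consistently_tagged (tg P) (tg Q)"
    if "P \<in> ?Pm" "Q \<in> ?Pm" "P \<noteq> Q" "card (P \<inter> Q) = 4" for P Q
    using column[OF that(1)] column[OF that(2)] that(3,4) unfolding tg_def
    by (intro consistently_tagged_extrusion_windows[OF inj col_vtx_mesh col_vtx_mesh]) auto
  ultimately show ?thesis
    unfolding consistent_tagging_def by blast
qed

end
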